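(* The unique $F$-coalgebra morphism $\varphi_\Pi:\mathbb DA^\infty\to\Omega$ from $(\mathbb DA^\infty,\Pi)$ to the final $F$-coalgebra $(\Omega,\omega)$ is injective.
   Context: $A$ finite alphabet; $A^\infty=A^*\cup A^\omega$ with $\sigma$-algebra $\Sigma_{A^\infty}$ generated by $S_\infty=\{\emptyset\}\cup\{\{w\}\mid w\in A^*\}\cup\{wA^\infty\mid w\in A^*\}$. $\mathbb I=[0,1]$. $\mathbb DA^\infty$ is the set of sub-probability measures on $(A^\infty,\Sigma_{A^\infty})$, with the $\sigma$-algebra generated by $m\mapsto m(S)$. For $m\in\mathbb DA^\infty$ and $a\in A$, the measure derivative is $m_a(S)=m(aS)$. $F$ is the functor $FX=\mathbb I\times\mathbb I\times X^A$, $Ff=\mathrm{id}\times\mathrm{id}\times f^A$. $\Pi:\mathbb DA^\infty\to F\mathbb DA^\infty$ is $\Pi(m)=\langle m(A^\infty),m(\{\varepsilon\}),a\mapsto m_a\rangle$. $\Omega=(\mathbb I\times\mathbb I)^{A^*}$ with $\omega(L)=\langle L(\varepsilon),a\mapsto L_a\rangle$, $L_a(w)=L(aw)$; $(\Omega,\omega)$ is the final $F$-coalgebra, and an $F$-coalgebra morphism from $(Y,\beta)$ to $(\Omega,\omega)$ is a map $\varphi$ with $\omega\circ\varphi=F\varphi\circ\beta$. *)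

theory Defs
  imports "HOL-Probability.Probability" "HOL-Library.Stream"
begin

text \<open>A^\<infinity> = A^* \<union> A^\<omega>: finite words are lists, infinite words are streams.\<close>
type_synonym 'a inf_word = "'a list + 'a stream"

fun app :: "'a list \<Rightarrow> 'a inf_word \<Rightarrow> 'a inf_word" where
  "app w (Inl v) = Inl (w @ v)"
| "app w (Inr s) = Inr (w @- s)"

definition cyl :: "'a list \<Rightarrow> 'a inf_word set" where
  "cyl w = range (app w)"

definition S_inf :: "'a inf_word set set" where
  "S_inf = {{}} \<union> {{Inl w} | w. True} \<union> {cyl w | w. True}"

definition M_inf :: "'a inf_word measure" where
  "M_inf = sigma UNIV S_inf"

definition DA :: "'a inf_word measure set" where
  "DA = {m. sets m = sets M_inf \<and> subprob_space m}"

definition mderiv :: "'a inf_word measure \<Rightarrow> 'a \<Rightarrow> 'a inf_word measure" where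
  "mderiv m a = measure_of (space M_inf) (sets M_inf) (\<lambda>S. emeasure m (app [a] ` S))"

definition Fmap :: "('x \<Rightarrow> 'y) \<Rightarrow> real \<times> real \<times> ('a \<Rightarrow> 'x) \<Rightarrow> real \<times> real \<times> ('a \<Rightarrow> 'y)" where
  "Fmap f t = (fst t, fst (snd t), f \<circ> snd (snd t))"

definition PiC :: "'a inf_word measure \<Rightarrow> real \<times> real \<times> ('a \<Rightarrow> 'a inf_word measure)" where
  "PiC m = (measure m (space M_inf), measure m {Inl []}, \<lambda>a. mderiv m a)"

definition Omega :: "('a list \<Rightarrow> real \<times> real) set" where
  "Omega = {L. \<forall>w. fst (L w) \<in> {0..1} \<and> snd (L w) \<in> {0..1}}"

definition omega :: "('a list \<Rightarrow> real \<times> real) \<Rightarrow> real \<times> real \<times> ('a \<Rightarrow> ('a list \<Rightarrow> real \<times> real))" where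
  "omega L = (fst (L []), snd (L []), \<lambda>a w. L (a # w))"

definition is_F_morphism :: "('a inf_word measure \<Rightarrow> ('a list \<Rightarrow> real \<times> real)) \<Rightarrow> bool" where
  "is_F_morphism phi \<longleftrightarrow>
     (\<forall>m\<in>DA. phi m \<in> Omega \<and> omega (phi m) = Fmap phi (PiC m))"

end

theory Submission
  imports Defs
begin

text \<open>
  Unfolding the morphism equation along a word w shows that any F-coalgebra morphism sends
  m to the function w \<mapsto> (m(wA^\<infinity>), m{w}), because the iterated derivative m_w satisfies
  m_w(S) = m(wS). So two measures with the same image agree on the generating family
  S_\<infinity>; as this family is closed under intersection (two cylinders are nested or disjoint)
  and contains the whole space, the measures coincide.
\<close>

lemma app_Nil [simp]: "app [] x = x"
  by (cases x) auto

lemma app_append: "app u (app v x) = app (u @ v) x"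
  by (cases x) auto

lemma inj_app: "inj (app w)"
proof (rule injI)
  fix x y assume "app w x = app w y"
  then show "x = y" by (cases x; cases y) auto
qed

lemma cyl_Nil: "cyl [] = UNIV"
  by (simp add: cyl_def)

lemma image_app_cyl: "app u ` cyl w = cyl (u @ w)"
  by (auto simp: cyl_def image_image app_append)

lemma cyl_antimono: "prefix v w \<Longrightarrow> cyl w \<subseteq> cyl v"
  by (auto simp: cyl_def prefix_def app_append[symmetric])

lemma stake_shift_prefix:
  assumes "length v \<le> length w" and "v @- s = w @- t"
  shows "prefix v w"
proof -
  have "take (length v) w = stake (length v) (w @- t)"
    using assms(1) by (simp add: stake_shift)
  also have "\<dots> = v"
    by (simp add: stake_shift flip: assms(2))
  finally show ?thesis by (metis take_is_prefix)
qed

lemma app_eq_app_prefix: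
  assumes "app v x = app w y"
  shows "prefix v w \<or> prefix w v"
proof (cases x; cases y)
  fix u u' assume "x = Inl u" "y = Inl u'"
  then have "v @ u = w @ u'" using assms by simp
  then have "prefix v (w @ u')" "prefix w (w @ u')"
    by (metis prefixI, simp)
  then show ?thesis by (rule prefix_same_cases)
next
  fix s t assume "x = Inr s" "y = Inr t"
  then have "v @- s = w @- t" using assms by simp
  then show ?thesis
    using stake_shift_prefix[of v w s t] stake_shift_prefix[of w v t s] by (metis nat_le_linear)
qed (use assms in auto)

lemma cyl_Int_cases: "cyl v \<inter> cyl w = cyl w \<or> cyl v \<inter> cyl w = cyl v \<or> cyl v \<inter> cyl w = {}"
proof (cases "prefix v w \<or> prefix w v")
  case True
  then show ?thesis using cyl_antimono by blast
next
  case False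
  then show ?thesis by (auto simp: cyl_def dest: app_eq_app_prefix)
qed

lemma S_inf_cases [consumes 1, case_names empty singleton cyl]:
  assumes "X \<in> S_inf"
  obtains "X = {}" | u where "X = {Inl u}" | w where "X = cyl w"
  using assms by (auto simp: S_inf_def)

lemma Int_stable_S_inf: "Int_stable S_inf"
proof (rule Int_stableI)
  have singleton: "{Inl u} \<inter> Z \<in> S_inf" "Z \<inter> {Inl u} \<in> S_inf" for u and Z :: "'a inf_word set"
    by (cases "Inl u \<in> Z"; auto simp: S_inf_def)+
  have empty: "{} \<in> S_inf"
    by (simp add: S_inf_def)
  have cyl_Int: "cyl v \<inter> cyl w \<in> S_inf" for v w :: "'a list"
    using cyl_Int_cases[of v w] by (auto simp: S_inf_def)
  fix X Y :: "'a inf_word set" assume X: "X \<in> S_inf" and Y: "Y \<in> S_inf"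
  from X show "X \<inter> Y \<in> S_inf"
  proof (cases rule: S_inf_cases)
    case (cyl v)
    from Y show ?thesis
      by (cases rule: S_inf_cases) (simp_all add: cyl empty singleton cyl_Int)
  qed (simp_all add: empty singleton)
qed

lemma space_M_inf [simp]: "space M_inf = UNIV"
  by (simp add: M_inf_def space_measure_of_conv)

lemma sets_M_inf: "sets M_inf = sigma_sets UNIV S_inf"
  by (simp add: M_inf_def)

lemma cyl_in_sets [measurable]: "cyl w \<in> sets M_inf"
  by (auto simp: sets_M_inf S_inf_def)

lemma singleton_in_sets [measurable]: "{Inl w} \<in> sets M_inf"
  by (auto simp: sets_M_inf S_inf_def)

lemma image_app_in_sets:
  assumes "S \<in> sets M_inf"
  shows "app u ` S \<in> sets M_inf"
proof -
  have "S \<in> sigma_sets UNIV S_inf" using assms by (simp add: sets_M_inf)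
  then have "app u ` S \<in> sigma_sets UNIV S_inf"
  proof (induction rule: sigma_sets.induct)
    case (Basic X)
    then have "app u ` X \<in> S_inf"
      by (cases rule: S_inf_cases) (auto simp: S_inf_def image_app_cyl)
    then show ?case ..
  next
    case (Compl X)
    \<comment> \<open>app u is injective with range cyl u, so complements become relative complements in cyl u\<close>
    have "app u ` (UNIV - X) = UNIV - ((UNIV - cyl u) \<union> app u ` X)"
      using inj_app[of u] by (auto simp: cyl_def inj_eq)
    also have "\<dots> \<in> sigma_sets UNIV S_inf"
      using Compl.IH by (intro sigma_sets.Compl sigma_sets_Un) (auto simp: S_inf_def)
    finally show ?case .
  qed (auto simp: image_UN intro: sigma_sets.Empty sigma_sets.Union)
  then show ?thesis by (simp add: sets_M_inf)
qed

lemma sets_mderiv [simp]: "sets (mderiv m a) = sets M_inf"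
  unfolding mderiv_def by (simp add: sets.space_closed del: space_M_inf)

lemma space_mderiv [simp]: "space (mderiv m a) = UNIV"
  using sets_eq_imp_space_eq[OF sets_mderiv] by simp

lemma emeasure_mderiv:
  assumes m: "sets m = sets M_inf" and S: "S \<in> sets M_inf"
  shows "emeasure (mderiv m a) S = emeasure m (app [a] ` S)"
  unfolding mderiv_def
proof (rule emeasure_measure_of_sigma[OF sets.sigma_algebra_axioms _ _ S])
  show "positive (sets M_inf) (\<lambda>S. emeasure m (app [a] ` S))"
    by (simp add: positive_def)
  show "countably_additive (sets M_inf) (\<lambda>S. emeasure m (app [a] ` S))"
  proof (rule countably_additiveI)
    fix A :: "nat \<Rightarrow> 'a inf_word set"
    assume A: "range A \<subseteq> sets M_inf" "disjoint_family A"
    have "range (\<lambda>i. app [a] ` A i) \<subseteq> sets m"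
      using A(1) m by (auto intro!: image_app_in_sets)
    moreover have "disjoint_family (\<lambda>i. app [a] ` A i)"
      using A(2) inj_app[of "[a]"] by (auto simp: disjoint_family_on_def inj_eq) blast
    ultimately show "(\<Sum>i. emeasure m (app [a] ` A i)) = emeasure m (app [a] ` \<Union> (range A))"
      by (simp add: suminf_emeasure image_UN)
  qed
qed

lemma measure_mderiv:
  "sets m = sets M_inf \<Longrightarrow> S \<in> sets M_inf \<Longrightarrow> measure (mderiv m a) S = measure m (app [a] ` S)"
  by (simp add: measure_def emeasure_mderiv)

lemma mderiv_in_DA:
  assumes "m \<in> DA"
  shows "mderiv m a \<in> DA"
proof -
  interpret subprob_space m using assms by (simp add: DA_def)
  have "emeasure (mderiv m a) UNIV = emeasure m (app [a] ` UNIV)"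
    using assms by (simp add: DA_def emeasure_mderiv[of m, symmetric] flip: space_M_inf)
  also have "\<dots> \<le> 1" by (rule subprob_emeasure_le_1)
  finally show ?thesis
    by (auto simp: DA_def intro!: subprob_spaceI)
qed

lemma F_morphism_apply:
  assumes phi: "is_F_morphism phi" and m: "m \<in> DA"
  shows "phi m w = (measure m (cyl w), measure m {Inl w})"
  using m
proof (induction w arbitrary: m)
  case Nil
  then have "omega (phi m) = Fmap phi (PiC m)" using phi by (simp add: is_F_morphism_def)
  then show ?case
    by (simp add: omega_def Fmap_def PiC_def cyl_Nil prod_eq_iff)
next
  case (Cons a w)
  then have "omega (phi m) = Fmap phi (PiC m)" using phi by (simp add: is_F_morphism_def)
  then have "phi m (a # w) = phi (mderiv m a) w"
    by (simp add: omega_def Fmap_def PiC_def fun_eq_iff)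
  also have "\<dots> = (measure m (app [a] ` cyl w), measure m (app [a] ` {Inl w}))"
    using Cons.IH[OF mderiv_in_DA[OF Cons.prems]] Cons.prems
    by (simp add: DA_def measure_mderiv)
  finally show ?case by (simp add: image_app_cyl)
qed

lemma DA_eqI:
  assumes m: "m \<in> DA" and n: "n \<in> DA"
    and cyl: "\<And>w. measure m (cyl w) = measure n (cyl w)"
    and singleton: "\<And>w. measure m {Inl w} = measure n {Inl w}"
  shows "m = n"
proof -
  interpret M: subprob_space m using m by (simp add: DA_def)
  interpret N: subprob_space n using n by (simp add: DA_def)
  show ?thesis
  proof (rule measure_eqI_generator_eq[OF Int_stable_S_inf, where A = "\<lambda>_. cyl []"])
    show "sets m = sigma_sets UNIV S_inf" "sets n = sigma_sets UNIV S_inf"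
      using m n by (simp_all add: DA_def sets_M_inf)
    show "range (\<lambda>_. cyl []) \<subseteq> S_inf"
      by (auto simp: S_inf_def)
    fix X :: "'a inf_word set" assume "X \<in> S_inf"
    then show "emeasure m X = emeasure n X"
      using cyl singleton by (auto simp: S_inf_def M.emeasure_eq_measure N.emeasure_eq_measure)
  qed (auto simp: S_inf_def cyl_Nil M.emeasure_eq_measure)
qed

theorem mainTheorem9:
  fixes phi :: "('a::finite) inf_word measure \<Rightarrow> ('a list \<Rightarrow> real \<times> real)"
  assumes "is_F_morphism phi"
  shows "inj_on phi DA"
proof (rule inj_onI)
  fix m n assume m: "m \<in> DA" and n: "n \<in> DA" and "phi m = phi n"
  then have "(measure m (cyl w), measure m {Inl w}) = (measure n (cyl w), measure n {Inl w})" for w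
    by (metis F_morphism_apply[OF assms])
  then show "m = n"
    by (intro DA_eqI[OF m n]) auto
qed

end
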